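(* For every $d$-dimensional state $\rho$ and all integers $1\le k\le d$, \[ \mu_k(\rho)\le\log\big[l(\rho)+\lambda(\rho)(k-l(\rho))\big]. \]
   Context: Fixed computational basis; $\Delta$ the dephasing map; $\Pi_I=\sum_{i\in I}|i\rangle\langle i|$; logs base 2. $R^\rho=\Delta(\rho)^{-1/2}\rho\Delta(\rho)^{-1/2}$ (inverse on the support); $\mu_k(\rho)=\max_{I\subseteq[d],|I|\le k}\log\|\Pi_IR^\rho\Pi_I\|_\infty$; $l(\rho)=\max\{\mathrm{rk}(\Pi_I\Delta(\rho)\Pi_I):\ I\subseteq[d],\ \mathrm{rk}(\Pi_I\rho\Pi_I)=1\}$; $\lambda(\rho)=\max\{|R^\rho_{ij}|:1\le i<j\le d,\ |R^\rho_{ij}|<1\}$, set to $0$ if the set is empty. *)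

theory Defs
  imports "HOL-Analysis.Analysis"
begin

text \<open>d-dimensional matrices: complex^'n^'n with d = CARD('n).\<close>

definition quad_form :: "complex^'n^'n \<Rightarrow> complex^'n \<Rightarrow> complex" where
  "quad_form A x = (\<Sum>i\<in>UNIV. \<Sum>j\<in>UNIV. cnj (x$i) * A$i$j * x$j)"

definition is_state :: "complex^'n^'n \<Rightarrow> bool" where
  "is_state \<rho> \<longleftrightarrow> (\<forall>i j. \<rho>$i$j = cnj (\<rho>$j$i))
     \<and> (\<forall>x. Im (quad_form \<rho> x) = 0 \<and> 0 \<le> Re (quad_form \<rho> x))
     \<and> (\<Sum>i\<in>UNIV. \<rho>$i$i) = 1"

definition dephase :: "complex^'n^'n \<Rightarrow> complex^'n^'n" where
  "dephase A = (\<chi> i j. if i = j then A$i$j else 0)"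

definition diag_inv_sqrt :: "complex^'n^'n \<Rightarrow> complex^'n^'n" where
  "diag_inv_sqrt D = (\<chi> i j. if i = j \<and> D$i$i \<noteq> 0 then 1 / csqrt (D$i$i) else 0)"

definition Rmat :: "complex^'n^'n \<Rightarrow> complex^'n^'n" where
  "Rmat \<rho> = diag_inv_sqrt (dephase \<rho>) ** \<rho> ** diag_inv_sqrt (dephase \<rho>)"

definition proj :: "'n set \<Rightarrow> complex^'n^'n" where
  "proj I = (\<chi> i j. if i = j \<and> i \<in> I then 1 else 0)"

definition opnorm :: "complex^'n^'n \<Rightarrow> real" where
  "opnorm A = onorm (\<lambda>x. A *v x)"

definition mu :: "nat \<Rightarrow> complex^('n::finite)^'n \<Rightarrow> real" where
  "mu k \<rho> = Max {log 2 (opnorm (proj I ** Rmat \<rho> ** proj I)) | I. card I \<le> k}"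

definition ell :: "complex^('n::finite)^'n \<Rightarrow> nat" where
  "ell \<rho> = Max {rank (proj I ** dephase \<rho> ** proj I) | I. rank (proj I ** \<rho> ** proj I) = 1}"

definition lam :: "complex^('n::{finite,linorder})^('n::{finite,linorder}) \<Rightarrow> real" where
  "lam \<rho> = (let S = {cmod (Rmat \<rho> $ i $ j) | i j. i < j \<and> cmod (Rmat \<rho> $ i $ j) < 1}
            in if S = {} then 0 else Max S)"

end

theory Submission
  imports Defs
begin

text \<open>
  Write D for the dephasing of \<rho> and R = D^(-1/2) \<rho> D^(-1/2). The 2\<times>2 principal minors of \<rho> are
  nonnegative, so every entry of R has modulus at most 1, and |R_ij| = |R_ji|. Fix a row i and let C
  be the set of columns j with |R_ij| = 1. Such a j makes the minor on {i, j} singular, which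
  forces column j of \<rho> to be a multiple of column i; hence \<rho> compressed to C has rank one while
  its dephasing has rank |C|, and so |C| \<le> l(\<rho>). All other off-diagonal entries of the row are at
  most \<lambda>(\<rho>), so the row sums of |\<Pi>_I R \<Pi>_I| are at most |C| + \<lambda>(k - |C|) \<le> l + \<lambda>(k - l) whenever
  |I| \<le> k. By the Schur test, a matrix whose entries have symmetric moduli has operator norm at
  most its largest absolute row sum.
\<close>

section \<open>Diagonal matrices and rank\<close>

definition diag_mat :: "('n \<Rightarrow> 'a::zero) \<Rightarrow> 'a^'n^'n" where
  "diag_mat d = (\<chi> i j. if i = j then d i else 0)"

lemma diag_mat_mult_nth: "(diag_mat d ** A) $ i $ j = d i * A $ i $ j"
  for A :: "'a::semiring_1^'m^'n"
  by (simp add: diag_mat_def matrix_matrix_mult_def if_distrib[of "\<lambda>x. x * _"] sum.delta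
      cong: if_cong)

lemma mult_diag_mat_nth: "(A ** diag_mat d) $ i $ j = A $ i $ j * d j"
  for A :: "'a::semiring_1^'n^'m"
  by (simp add: diag_mat_def matrix_matrix_mult_def if_distrib[of "\<lambda>x. _ * x"] sum.delta'
      cong: if_cong)

lemma matrix_vector_mult_axis_nth: "(A *v axis j 1) $ i = A $ i $ j"
  for A :: "'a::semiring_1^'n^'m"
  by (simp add: matrix_vector_mult_def axis_def if_distrib[of "\<lambda>x. _ * x"] cong: if_cong)

lemma proj_eq_diag_mat: "proj I = diag_mat (\<lambda>i. if i \<in> I then 1 else 0)"
  by (simp add: proj_def diag_mat_def vec_eq_iff)

lemma dephase_eq_diag_mat: "dephase A = diag_mat (\<lambda>i. A $ i $ i)"
  by (simp add: dephase_def diag_mat_def vec_eq_iff)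

lemma proj_compress_nth:
  "(proj I ** A ** proj I) $ i $ j = (if i \<in> I \<and> j \<in> I then A $ i $ j else 0)"
  by (simp add: proj_eq_diag_mat diag_mat_mult_nth mult_diag_mat_nth)

lemma proj_compress_diag_mat:
  "proj I ** diag_mat d ** proj I = diag_mat (\<lambda>i. if i \<in> I then d i else 0)"
  by (simp add: vec_eq_iff proj_compress_nth diag_mat_def)

lemma rank_eq_1_if_rows_in_span:
  fixes M :: "'a::field^'n^'m"
  assumes "\<And>m. row m M \<in> vec.span {w}" and "row i M \<noteq> 0"
  shows "rank M = 1"
proof -
  have "rows M \<subseteq> vec.span {w}"
    using assms(1) by (auto simp: rows_def)
  then have "vec.dim (rows M) \<le> vec.dim {w}"
    by (rule vec.dim_mono)
  also have "\<dots> \<le> 1"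
    by simp
  finally have "vec.dim (rows M) \<le> 1" .
  moreover have "vec.dim (rows M) \<noteq> 0"
    using assms(2) by (auto simp: rows_def)
  ultimately show ?thesis
    unfolding row_rank_def_gen by linarith
qed

lemma row_diag_mat: "row i (diag_mat d) = d i *s axis i 1"
  for d :: "'n::finite \<Rightarrow> 'a::field"
  by (simp add: vec_eq_iff row_def diag_mat_def axis_def)

lemma card_nonzero_le_rank_diag_mat:
  fixes d :: "'n::finite \<Rightarrow> 'a::field"
  shows "card {i. d i \<noteq> 0} \<le> rank (diag_mat d)"
proof -
  let ?B = "(\<lambda>i. axis i (1 :: 'a)) ` {i. d i \<noteq> 0}"
  have "?B \<subseteq> vec.span (rows (diag_mat d))"
  proof
    fix x assume "x \<in> ?B"
    then obtain i where "d i \<noteq> 0" and x: "x = axis i 1"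
      by auto
    then have "x = (1 / d i) *s row i (diag_mat d)"
      by (simp add: x row_diag_mat)
    moreover have "row i (diag_mat d) \<in> rows (diag_mat d)"
      by (auto simp: rows_def)
    ultimately show "x \<in> vec.span (rows (diag_mat d))"
      by (simp add: vec.span_base vec.span_scale)
  qed
  moreover have "vec.independent ?B"
    by (rule vec.independent_mono[OF independent_cart_basis]) (auto simp: cart_basis_def)
  moreover have "card ?B = card {i. d i \<noteq> 0}"
    by (rule card_image) (auto simp: inj_on_def axis_eq_axis)
  ultimately show ?thesis
    unfolding row_rank_def_gen
    by (metis vec.dim_eq_card_independent vec.dim_mono vec.dim_span)
qed

section \<open>Positive semidefinite matrices\<close>

definition sesq_form :: "complex^'n^'n \<Rightarrow> complex^'n \<Rightarrow> complex^'n \<Rightarrow> complex" where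
  "sesq_form A x y = (\<Sum>i\<in>UNIV. \<Sum>j\<in>UNIV. cnj (x $ i) * A $ i $ j * y $ j)"

lemma quad_form_eq_sesq_form: "quad_form A x = sesq_form A x x"
  by (simp add: quad_form_def sesq_form_def)

lemma sesq_form_add_left: "sesq_form A (x + y) z = sesq_form A x z + sesq_form A y z"
  by (simp add: sesq_form_def algebra_simps sum.distrib)

lemma sesq_form_add_right: "sesq_form A x (y + z) = sesq_form A x y + sesq_form A x z"
  by (simp add: sesq_form_def algebra_simps sum.distrib)

lemma sesq_form_scale_left: "sesq_form A (c *s x) y = cnj c * sesq_form A x y"
  by (simp add: sesq_form_def algebra_simps sum_distrib_left)

lemma sesq_form_scale_right: "sesq_form A x (c *s y) = c * sesq_form A x y"
  by (simp add: sesq_form_def algebra_simps sum_distrib_left)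

lemma sesq_form_axis_left: "sesq_form A (axis m 1) y = (A *v y) $ m"
proof -
  have "(\<Sum>j\<in>UNIV. cnj (axis m 1 $ i) * A $ i $ j * y $ j)
      = (if i = m then (A *v y) $ m else 0)" for i
    by (simp add: axis_def matrix_vector_mult_def)
  then show ?thesis
    unfolding sesq_form_def by simp
qed

lemma sesq_form_axis_right: "sesq_form A x (axis m 1) = (\<Sum>i\<in>UNIV. cnj (x $ i) * A $ i $ m)"
  by (simp add: sesq_form_def axis_def if_distrib[of "\<lambda>x. _ * x"] sum.delta' cong: if_cong)

lemma quad_form_axis: "quad_form A (axis m 1) = A $ m $ m"
  by (simp add: quad_form_eq_sesq_form sesq_form_axis_left matrix_vector_mult_axis_nth)

lemma quad_form_add_axis:
  assumes herm: "\<And>i j. A $ i $ j = cnj (A $ j $ i)"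
  shows "quad_form A (x + t *s axis m 1) = quad_form A x + t * cnj ((A *v x) $ m)
      + cnj t * (A *v x) $ m + cnj t * t * A $ m $ m"
proof -
  have "sesq_form A x (axis m 1) = cnj ((A *v x) $ m)"
    by (simp add: sesq_form_axis_right matrix_vector_mult_def herm[of _ m] mult.commute)
  moreover have "sesq_form A (axis m 1) (axis m 1) = A $ m $ m"
    by (simp add: sesq_form_axis_left matrix_vector_mult_axis_nth)
  moreover have "quad_form A (x + t *s axis m 1) = sesq_form A x x + t * sesq_form A x (axis m 1)
      + cnj t * sesq_form A (axis m 1) x + cnj t * t * sesq_form A (axis m 1) (axis m 1)"
    by (simp add: quad_form_eq_sesq_form sesq_form_add_left sesq_form_add_right
        sesq_form_scale_left sesq_form_scale_right distrib_left mult.assoc)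
  ultimately show ?thesis
    by (simp only: quad_form_eq_sesq_form sesq_form_axis_left)
qed

definition psd :: "complex^'n^'n \<Rightarrow> bool" where
  "psd A \<longleftrightarrow> (\<forall>i j. A $ i $ j = cnj (A $ j $ i))
     \<and> (\<forall>x. Im (quad_form A x) = 0 \<and> 0 \<le> Re (quad_form A x))"

lemma is_state_imp_psd: "is_state \<rho> \<Longrightarrow> psd \<rho>"
  unfolding is_state_def psd_def by blast

lemma psd_hermitian: "psd A \<Longrightarrow> A $ i $ j = cnj (A $ j $ i)"
  unfolding psd_def by blast

lemma psd_quad_form_nonneg: "psd A \<Longrightarrow> 0 \<le> Re (quad_form A x)"
  unfolding psd_def by blast

lemma psd_diag_real:
  assumes "psd A"
  shows "A $ i $ i = of_real (Re (A $ i $ i))"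
proof -
  have "Im (A $ i $ i) = 0"
    using assms quad_form_axis[of A i] unfolding psd_def by metis
  then show ?thesis
    by (simp add: complex_eq_iff)
qed

lemma psd_diag_nonneg: "psd A \<Longrightarrow> 0 \<le> Re (A $ i $ i)"
  using psd_quad_form_nonneg[of A "axis i 1"] by (simp add: quad_form_axis)

text \<open>Nonnegativity of the quadratic form at x - \<epsilon> (A x)_m e_m.\<close>

lemma psd_quad_form_perturb:
  assumes "psd A"
  shows "0 \<le> Re (quad_form A x) + \<epsilon> * (cmod ((A *v x) $ m))\<^sup>2 * (\<epsilon> * Re (A $ m $ m) - 2)"
proof -
  define z where "z = (A *v x) $ m"
  define t where "t = - of_real \<epsilon> * z"
  have "t * cnj z + cnj t * z + cnj t * t * A $ m $ m
      = of_real \<epsilon> * (of_real \<epsilon> * of_real (Re (A $ m $ m)) - 2) * (z * cnj z)"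
    by (subst psd_diag_real[OF assms]) (simp add: t_def algebra_simps)
  also have "\<dots> = of_real (\<epsilon> * (cmod z)\<^sup>2 * (\<epsilon> * Re (A $ m $ m) - 2))"
    by (simp flip: complex_norm_square)
  finally have "quad_form A (x + t *s axis m 1)
      = quad_form A x + of_real (\<epsilon> * (cmod z)\<^sup>2 * (\<epsilon> * Re (A $ m $ m) - 2))"
    by (simp add: quad_form_add_axis[OF psd_hermitian[OF assms]] z_def add.assoc)
  then show ?thesis
    using psd_quad_form_nonneg[OF assms, of "x + t *s axis m 1"] by (simp add: z_def)
qed

lemma psd_quad_form_eq_0_imp:
  assumes "psd A" and "quad_form A x = 0"
  shows "A *v x = 0"
proof (subst vec_eq_iff, intro allI)
  fix m
  define c where "c = Re (A $ m $ m)"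
  define \<epsilon> where "\<epsilon> = 1 / (c + 1)"
  have "0 \<le> c"
    using psd_diag_nonneg[OF assms(1)] by (simp add: c_def)
  then have "0 < \<epsilon>" and "\<epsilon> * c - 2 < 0"
    by (simp_all add: \<epsilon>_def divide_less_eq)
  moreover have "0 \<le> \<epsilon> * (cmod ((A *v x) $ m))\<^sup>2 * (\<epsilon> * c - 2)"
    using psd_quad_form_perturb[OF assms(1), of x \<epsilon> m] by (simp add: assms(2) c_def)
  ultimately have "(cmod ((A *v x) $ m))\<^sup>2 \<le> 0"
    by (simp add: zero_le_mult_iff mult_le_0_iff)
  then show "(A *v x) $ m = 0 $ m"
    by simp
qed

lemma psd_norm_entry_sq_le:
  assumes "psd A"
  shows "(cmod (A $ i $ j))\<^sup>2 \<le> Re (A $ i $ i) * Re (A $ j $ j)"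
proof (cases "Re (A $ i $ i) = 0")
  case True
  then have "A *v axis i 1 = 0"
    using psd_diag_real[OF assms, of i]
    by (intro psd_quad_form_eq_0_imp[OF assms]) (simp add: quad_form_axis)
  then have "A $ j $ i = 0"
    using matrix_vector_mult_axis_nth[of A i j] by simp
  then show ?thesis
    using psd_hermitian[OF assms, of i j] by (simp add: True)
next
  case False
  define c where "c = Re (A $ i $ i)"
  have "0 < c"
    using False psd_diag_nonneg[OF assms, of i] by (simp add: c_def)
  have "0 \<le> Re (A $ j $ j) + (1 / c) * (cmod (A $ i $ j))\<^sup>2 * ((1 / c) * c - 2)"
    using psd_quad_form_perturb[OF assms, of "axis j 1" "1 / c" i]
    by (simp add: quad_form_axis matrix_vector_mult_axis_nth c_def)
  with \<open>0 < c\<close> have "(cmod (A $ i $ j))\<^sup>2 / c \<le> Re (A $ j $ j)"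
    by simp
  with \<open>0 < c\<close> show ?thesis
    by (simp add: c_def divide_le_eq mult.commute)
qed

text \<open>
  If the minor on {i, j} is singular, then e_j - (A_ij / A_ii) e_i is isotropic, hence in the kernel.
\<close>

lemma psd_column_proportional:
  assumes "psd A" and pos: "0 < Re (A $ i $ i)"
    and singular: "(cmod (A $ i $ j))\<^sup>2 = Re (A $ i $ i) * Re (A $ j $ j)"
  shows "A $ m $ j = (A $ i $ j / A $ i $ i) * A $ m $ i"
proof -
  define a where "a = Re (A $ i $ i)"
  define z where "z = A $ i $ j"
  define t where "t = - z / of_real a"
  have ii: "A $ i $ i = of_real a" and jj: "A $ j $ j = of_real (Re (A $ j $ j))"
    using psd_diag_real[OF assms(1)] by (simp_all add: a_def)
  have zz: "z * cnj z = of_real (a * Re (A $ j $ j))"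
    using singular by (simp add: a_def z_def flip: complex_norm_square)
  have "a \<noteq> 0"
    using pos by (simp add: a_def)
  have "quad_form A (axis j 1 + t *s axis i 1)
      = A $ j $ j + t * cnj z + cnj t * z + cnj t * t * of_real a"
    by (simp add: quad_form_add_axis[OF psd_hermitian[OF assms(1)]] quad_form_axis
        matrix_vector_mult_axis_nth z_def ii)
  also have "\<dots> = A $ j $ j - z * cnj z / of_real a"
    using \<open>a \<noteq> 0\<close> by (simp add: t_def field_simps)
  also have "\<dots> = 0"
    using \<open>a \<noteq> 0\<close> by (subst jj) (simp add: zz)
  finally have "A *v (axis j 1 + t *s axis i 1) = 0"
    by (rule psd_quad_form_eq_0_imp[OF assms(1)])
  then have "A $ m $ j + t * A $ m $ i = 0"
    by (simp add: matrix_vector_right_distrib vector_scalar_commute vec_eq_iff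
        matrix_vector_mult_axis_nth)
  then show ?thesis
    using \<open>a \<noteq> 0\<close> by (simp add: t_def z_def ii field_simps)
qed

section \<open>The normalised matrix R\<close>

definition inv_sqrt_diag :: "complex^'n^'n \<Rightarrow> 'n \<Rightarrow> complex" where
  "inv_sqrt_diag A i = (if A $ i $ i \<noteq> 0 then 1 / csqrt (A $ i $ i) else 0)"

lemma Rmat_nth: "Rmat A $ i $ j = inv_sqrt_diag A i * A $ i $ j * inv_sqrt_diag A j"
proof -
  have "diag_inv_sqrt (dephase A) = diag_mat (inv_sqrt_diag A)"
    by (simp add: diag_inv_sqrt_def dephase_def inv_sqrt_diag_def diag_mat_def vec_eq_iff)
  then show ?thesis
    by (simp add: Rmat_def diag_mat_mult_nth mult_diag_mat_nth)
qed

lemma inv_sqrt_diag_psd: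
  assumes "psd A"
  shows "inv_sqrt_diag A i
    = (if 0 < Re (A $ i $ i) then of_real (1 / sqrt (Re (A $ i $ i))) else 0)"
proof -
  have "0 \<le> Re (A $ i $ i)"
    using psd_diag_nonneg[OF assms] .
  then show ?thesis
    unfolding inv_sqrt_diag_def
    by (subst (1 2) psd_diag_real[OF assms]) (auto simp: csqrt_of_real)
qed

lemma norm_Rmat_nth:
  assumes "psd A"
  shows "cmod (Rmat A $ i $ j) = (if 0 < Re (A $ i $ i) \<and> 0 < Re (A $ j $ j)
      then cmod (A $ i $ j) / sqrt (Re (A $ i $ i) * Re (A $ j $ j)) else 0)"
  by (simp add: Rmat_nth inv_sqrt_diag_psd[OF assms] norm_mult real_sqrt_mult norm_divide)

lemma norm_Rmat_le_1:
  assumes "psd A"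
  shows "cmod (Rmat A $ i $ j) \<le> 1"
  using real_le_rsqrt[OF psd_norm_entry_sq_le[OF assms, of i j]]
  by (simp add: norm_Rmat_nth[OF assms])

lemma norm_Rmat_commute:
  assumes "psd A"
  shows "cmod (Rmat A $ i $ j) = cmod (Rmat A $ j $ i)"
  using psd_hermitian[OF assms, of i j] by (simp add: norm_Rmat_nth[OF assms] mult.commute)

lemma norm_Rmat_eq_1_iff:
  assumes "psd A"
  shows "cmod (Rmat A $ i $ j) = 1 \<longleftrightarrow> 0 < Re (A $ i $ i) \<and> 0 < Re (A $ j $ j)
      \<and> (cmod (A $ i $ j))\<^sup>2 = Re (A $ i $ i) * Re (A $ j $ j)"
  by (auto simp: norm_Rmat_nth[OF assms] field_simps intro: real_sqrt_unique)
    (metis real_sqrt_pow2 mult_pos_pos less_imp_le)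

lemma norm_Rmat_diag:
  assumes "psd A" and "0 < Re (A $ i $ i)"
  shows "cmod (Rmat A $ i $ i) = 1"
proof -
  have "cmod (A $ i $ i) = Re (A $ i $ i)"
    using assms by (subst psd_diag_real[OF assms(1)]) simp
  then show ?thesis
    using assms by (simp add: norm_Rmat_eq_1_iff power2_eq_square)
qed

section \<open>The Schur test\<close>

lemma Cauchy_Schwarz_weighted:
  fixes a u :: "'i \<Rightarrow> real"
  assumes "\<And>j. 0 \<le> a j"
  shows "(\<Sum>j\<in>S. a j * u j)\<^sup>2 \<le> (\<Sum>j\<in>S. a j) * (\<Sum>j\<in>S. a j * (u j)\<^sup>2)"
  using Cauchy_Schwarz_ineq_sum[of "\<lambda>j. sqrt (a j)" "\<lambda>j. sqrt (a j) * u j" S] assms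
  by (simp add: power_mult_distrib mult.assoc[symmetric])

lemma norm_vec_sq: "(norm x)\<^sup>2 = (\<Sum>i\<in>UNIV. (norm (x $ i))\<^sup>2)"
  for x :: "'a::real_normed_vector^'n"
  by (simp add: norm_vec_def L2_set_def sum_nonneg)

lemma norm_matrix_vector_mult_le_Schur:
  fixes M :: "'a::real_normed_field^'n^'m"
  assumes rows: "\<And>i. (\<Sum>j\<in>UNIV. norm (M $ i $ j)) \<le> B"
    and cols: "\<And>j. (\<Sum>i\<in>UNIV. norm (M $ i $ j)) \<le> B"
  shows "norm (M *v x) \<le> B * norm x"
proof -
  define a where "a i j = norm (M $ i $ j)" for i j
  define u where "u j = norm (x $ j)" for j
  have "0 \<le> B"
    using rows[of undefined] sum_nonneg[of UNIV "\<lambda>j. norm (M $ undefined $ j)"] by simp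
  have row: "(norm ((M *v x) $ i))\<^sup>2 \<le> B * (\<Sum>j\<in>UNIV. a i j * (u j)\<^sup>2)" for i
  proof -
    have "norm ((M *v x) $ i) \<le> (\<Sum>j\<in>UNIV. a i j * u j)"
      unfolding matrix_vector_mult_def a_def u_def
      by (simp add: norm_sum[THEN order_trans] norm_mult)
    then have "(norm ((M *v x) $ i))\<^sup>2 \<le> (\<Sum>j\<in>UNIV. a i j * u j)\<^sup>2"
      by (simp add: power_mono)
    also have "\<dots> \<le> (\<Sum>j\<in>UNIV. a i j) * (\<Sum>j\<in>UNIV. a i j * (u j)\<^sup>2)"
      by (rule Cauchy_Schwarz_weighted) (simp add: a_def)
    also have "\<dots> \<le> B * (\<Sum>j\<in>UNIV. a i j * (u j)\<^sup>2)"
      using rows[of i] by (intro mult_right_mono sum_nonneg) (simp_all add: a_def)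
    finally show ?thesis .
  qed
  have "(norm (M *v x))\<^sup>2 = (\<Sum>i\<in>UNIV. (norm ((M *v x) $ i))\<^sup>2)"
    by (rule norm_vec_sq)
  also have "\<dots> \<le> (\<Sum>i\<in>UNIV. B * (\<Sum>j\<in>UNIV. a i j * (u j)\<^sup>2))"
    by (rule sum_mono) (rule row)
  also have "\<dots> = B * (\<Sum>j\<in>UNIV. \<Sum>i\<in>UNIV. a i j * (u j)\<^sup>2)"
    by (simp only: sum_distrib_left[symmetric] sum.swap[of "\<lambda>i j. a i j * (u j)\<^sup>2"])
  also have "\<dots> = B * (\<Sum>j\<in>UNIV. (\<Sum>i\<in>UNIV. a i j) * (u j)\<^sup>2)"
    by (simp add: sum_distrib_right)
  also have "\<dots> \<le> B * (\<Sum>j\<in>UNIV. B * (u j)\<^sup>2)"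
    using cols \<open>0 \<le> B\<close> by (intro mult_left_mono sum_mono mult_right_mono) (simp_all add: a_def)
  also have "\<dots> = (B * norm x)\<^sup>2"
    by (simp add: norm_vec_sq u_def power_mult_distrib sum_distrib_left power2_eq_square[of B]
        mult.assoc)
  finally show ?thesis
    using \<open>0 \<le> B\<close> by (rule power2_le_imp_le[OF _ mult_nonneg_nonneg]) simp
qed

section \<open>The quantities l and \<lambda>\<close>

lemma rank_proj_compress_eq_1:
  fixes A :: "complex^('n::finite)^'n"
  assumes "psd A" and "i \<in> C" and unimodular: "\<And>j. j \<in> C \<Longrightarrow> cmod (Rmat A $ i $ j) = 1"
  shows "rank (proj C ** A ** proj C) = 1"
proof (rule rank_eq_1_if_rows_in_span)
  have pos: "0 < Re (A $ i $ i)"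
    using unimodular[OF \<open>i \<in> C\<close>] norm_Rmat_eq_1_iff[OF assms(1)] by blast
  define w :: "complex^'n" where "w = (\<chi> j. if j \<in> C then A $ i $ j / A $ i $ i else 0)"
  show "row m (proj C ** A ** proj C) \<in> vec.span {w}" for m
  proof -
    have "row m (proj C ** A ** proj C) $ j = ((if m \<in> C then A $ m $ i else 0) *s w) $ j" for j
    proof (cases "m \<in> C \<and> j \<in> C")
      case True
      then have "A $ m $ j = (A $ i $ j / A $ i $ i) * A $ m $ i"
        using psd_column_proportional[OF assms(1) pos] unimodular norm_Rmat_eq_1_iff[OF assms(1)]
        by blast
      with True show ?thesis
        by (simp add: row_def proj_compress_nth w_def mult.commute)
    next
      case False
      then show ?thesis
        by (auto simp: row_def proj_compress_nth w_def)
    qed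
    then have "row m (proj C ** A ** proj C) = (if m \<in> C then A $ m $ i else 0) *s w"
      by (simp add: vec_eq_iff)
    then show ?thesis
      by (simp add: vec.span_base vec.span_scale)
  qed
  have "row i (proj C ** A ** proj C) $ i \<noteq> 0"
    using \<open>i \<in> C\<close> pos by (auto simp: row_def proj_compress_nth)
  then show "row i (proj C ** A ** proj C) \<noteq> 0"
    by auto
qed

lemma card_le_ell:
  fixes \<rho> :: "complex^('n::finite)^'n"
  assumes "psd \<rho>" and "i \<in> C" and unimodular: "\<And>j. j \<in> C \<Longrightarrow> cmod (Rmat \<rho> $ i $ j) = 1"
  shows "card C \<le> ell \<rho>"
proof -
  have "0 < Re (\<rho> $ j $ j)" if "j \<in> C" for j
    using unimodular[OF that] norm_Rmat_eq_1_iff[OF assms(1)] by blast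
  then have "C = {j. (if j \<in> C then \<rho> $ j $ j else 0) \<noteq> 0}"
    by force
  then have "card C \<le> rank (proj C ** dephase \<rho> ** proj C)"
    using card_nonzero_le_rank_diag_mat[of "\<lambda>j. if j \<in> C then \<rho> $ j $ j else 0"]
    by (simp add: dephase_eq_diag_mat proj_compress_diag_mat)
  also have "\<dots> \<le> ell \<rho>"
    unfolding ell_def
    using rank_proj_compress_eq_1[OF assms]
    by (intro Max_ge)
      (auto intro: finite_subset[of _ "range (\<lambda>I. rank (proj I ** dephase \<rho> ** proj I))"])
  finally show ?thesis .
qed

lemma one_le_ell:
  fixes \<rho> :: "complex^('n::finite)^'n"
  assumes "is_state \<rho>"
  shows "1 \<le> ell \<rho>"
proof -
  have psd: "psd \<rho>"
    by (rule is_state_imp_psd[OF assms])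
  have "(\<Sum>i\<in>UNIV. \<rho> $ i $ i) = 1"
    using assms unfolding is_state_def by blast
  then obtain i where "\<rho> $ i $ i \<noteq> 0"
    by (metis (mono_tags) sum.neutral zero_neq_one)
  then have "Re (\<rho> $ i $ i) \<noteq> 0"
    by (subst (asm) psd_diag_real[OF psd]) simp
  then have "0 < Re (\<rho> $ i $ i)"
    using psd_diag_nonneg[OF psd, of i] by simp
  then show ?thesis
    using card_le_ell[OF psd, of i "{i}"] norm_Rmat_diag[OF psd] by simp
qed

lemma finite_norm_Rmat_entries: "finite {cmod (Rmat \<rho> $ i $ j) | i j. P i j}"
  for \<rho> :: "complex^('n::finite)^'n"
  by (rule finite_subset[of _ "(\<lambda>(i, j). cmod (Rmat \<rho> $ i $ j)) ` UNIV"]) auto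

lemma lam_nonneg_le_1: "0 \<le> lam \<rho>" "lam \<rho> \<le> 1"
proof -
  define S where "S = {cmod (Rmat \<rho> $ i $ j) | i j. i < j \<and> cmod (Rmat \<rho> $ i $ j) < 1}"
  have "finite S"
    unfolding S_def by (rule finite_norm_Rmat_entries)
  moreover have "x \<in> S \<Longrightarrow> 0 \<le> x \<and> x < 1" for x
    by (auto simp: S_def)
  ultimately show "0 \<le> lam \<rho>" "lam \<rho> \<le> 1"
    using Max_in[of S] by (fastforce simp: lam_def Let_def S_def[symmetric])+
qed

lemma norm_Rmat_le_lam:
  assumes "psd \<rho>" and "i \<noteq> j" and "cmod (Rmat \<rho> $ i $ j) < 1"
  shows "cmod (Rmat \<rho> $ i $ j) \<le> lam \<rho>"
proof -
  define S where "S = {cmod (Rmat \<rho> $ i $ j) | i j. i < j \<and> cmod (Rmat \<rho> $ i $ j) < 1}"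
  have "finite S"
    unfolding S_def by (rule finite_norm_Rmat_entries)
  moreover have "cmod (Rmat \<rho> $ i $ j) \<in> S"
  proof (cases "i < j")
    case True
    then show ?thesis
      unfolding S_def using assms(3) by blast
  next
    case False
    then have "j < i"
      using assms(2) by simp
    then show ?thesis
      unfolding S_def norm_Rmat_commute[OF assms(1), of i j]
      using assms(3)[unfolded norm_Rmat_commute[OF assms(1), of i j]] by blast
  qed
  ultimately show ?thesis
    by (auto simp: lam_def Let_def S_def[symmetric])
qed

lemma affine_bound_mono:
  fixes L c l j k :: real
  assumes "0 \<le> L" "L \<le> 1" "c \<le> l" "j \<le> k"
  shows "c + L * (j - c) \<le> l + L * (k - l)"
proof -
  have "L * j \<le> L * k" and "(1 - L) * c \<le> (1 - L) * l"
    using assms by (simp_all add: mult_left_mono)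
  then show ?thesis
    by (simp add: algebra_simps)
qed

lemma row_sum_Rmat_compress_le:
  fixes \<rho> :: "complex^('n::{finite,linorder})^('n::{finite,linorder})"
  assumes "is_state \<rho>" and "card I \<le> k"
  shows "(\<Sum>j\<in>UNIV. cmod ((proj I ** Rmat \<rho> ** proj I) $ i $ j))
      \<le> real (ell \<rho>) + lam \<rho> * (real k - real (ell \<rho>))"
proof -
  have psd: "psd \<rho>"
    by (rule is_state_imp_psd[OF assms(1)])
  have bound_nonneg: "0 \<le> real (ell \<rho>) + lam \<rho> * (real k - real (ell \<rho>))"
    using affine_bound_mono[of "lam \<rho>" 0 "real (ell \<rho>)" 0 "real k"] lam_nonneg_le_1[of \<rho>] by simp
  show ?thesis
  proof (cases "i \<in> I \<and> 0 < Re (\<rho> $ i $ i)")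
    case False
    then have "cmod ((proj I ** Rmat \<rho> ** proj I) $ i $ j) = 0" for j
      by (auto simp: proj_compress_nth Rmat_nth inv_sqrt_diag_psd[OF psd])
    then show ?thesis
      using bound_nonneg by simp
  next
    case True
    define C where "C = {j \<in> I. cmod (Rmat \<rho> $ i $ j) = 1}"
    have "C \<subseteq> I" and "i \<in> C"
      using True norm_Rmat_diag[OF psd] by (auto simp: C_def)
    have "card C \<le> ell \<rho>"
      by (rule card_le_ell[OF psd \<open>i \<in> C\<close>]) (simp add: C_def)
    have "(\<Sum>j\<in>UNIV. cmod ((proj I ** Rmat \<rho> ** proj I) $ i $ j))
        = (\<Sum>j\<in>I. cmod (Rmat \<rho> $ i $ j))"
      using True by (simp add: proj_compress_nth if_distrib[of cmod] sum.If_cases)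
    also have "\<dots> = (\<Sum>j\<in>C. cmod (Rmat \<rho> $ i $ j)) + (\<Sum>j\<in>I - C. cmod (Rmat \<rho> $ i $ j))"
      using sum.subset_diff[OF \<open>C \<subseteq> I\<close>] by (simp add: add.commute)
    also have "\<dots> \<le> real (card C) + real (card I - card C) * lam \<rho>"
    proof -
      have "cmod (Rmat \<rho> $ i $ j) \<le> lam \<rho>" if "j \<in> I - C" for j
        using that \<open>i \<in> C\<close> norm_Rmat_le_1[OF psd, of i j]
        by (intro norm_Rmat_le_lam[OF psd]) (auto simp: C_def)
      then show ?thesis
        using sum_bounded_above[of "I - C" "\<lambda>j. cmod (Rmat \<rho> $ i $ j)" "lam \<rho>"]
          card_Diff_subset[OF _ \<open>C \<subseteq> I\<close>] by (simp add: C_def)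
    qed
    also have "\<dots> \<le> real (ell \<rho>) + lam \<rho> * (real k - real (ell \<rho>))"
      using affine_bound_mono[of "lam \<rho>" "real (card C)" "real (ell \<rho>)" "real (card I)" "real k"]
        lam_nonneg_le_1[of \<rho>] \<open>card C \<le> ell \<rho>\<close> assms(2) card_mono[OF _ \<open>C \<subseteq> I\<close>]
      by (simp add: of_nat_diff mult.commute)
    finally show ?thesis .
  qed
qed

lemma opnorm_nonneg: "0 \<le> opnorm A"
  unfolding opnorm_def by (rule onorm_pos_le) (rule matrix_vector_mul_bounded_linear)

lemma opnorm_Rmat_compress_le:
  fixes \<rho> :: "complex^('n::{finite,linorder})^('n::{finite,linorder})"
  assumes "is_state \<rho>" and "card I \<le> k"
  shows "opnorm (proj I ** Rmat \<rho> ** proj I) \<le> real (ell \<rho>) + lam \<rho> * (real k - real (ell \<rho>))"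
proof -
  have "cmod ((proj I ** Rmat \<rho> ** proj I) $ i $ j) = cmod ((proj I ** Rmat \<rho> ** proj I) $ j $ i)"
    for i j
    using norm_Rmat_commute[OF is_state_imp_psd[OF assms(1)], of i j]
    by (auto simp: proj_compress_nth)
  then show ?thesis
    unfolding opnorm_def
    using row_sum_Rmat_compress_le[OF assms]
    by (intro onorm_le norm_matrix_vector_mult_le_Schur) simp_all
qed

text \<open>The case y = 0 relies on the junk value log 2 0 = 0.\<close>

lemma log2_le_log2_bound:
  fixes y B :: real
  assumes "0 \<le> y" "y \<le> B" "1 \<le> B"
  shows "log 2 y \<le> log 2 B"
proof (cases "y = 0")
  case True
  then show ?thesis
    using assms(3) by (simp add: log_def)
next
  case False
  then show ?thesis
    using assms by (intro log_mono) simp_all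
qed

theorem lemma7:
  fixes \<rho> :: "complex^('n::{finite,linorder})^('n::{finite,linorder})" and k :: nat
  assumes "is_state \<rho>" and "1 \<le> k" and "k \<le> CARD('n)"
  shows "mu k \<rho> \<le> log 2 (real (ell \<rho>) + lam \<rho> * (real k - real (ell \<rho>)))"
proof -
  let ?B = "real (ell \<rho>) + lam \<rho> * (real k - real (ell \<rho>))"
  have "1 \<le> ?B"
    using affine_bound_mono[of "lam \<rho>" 1 "real (ell \<rho>)" 1 "real k"]
      lam_nonneg_le_1[of \<rho>] one_le_ell[OF assms(1)] assms(2) by simp
  then have "log 2 (opnorm (proj I ** Rmat \<rho> ** proj I)) \<le> log 2 ?B" if "card I \<le> k" for I
    by (intro log2_le_log2_bound opnorm_nonneg opnorm_Rmat_compress_le[OF assms(1) that])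
  moreover have "finite {log 2 (opnorm (proj I ** Rmat \<rho> ** proj I)) | I. card I \<le> k}"
    by (rule finite_subset[of _ "range (\<lambda>I. log 2 (opnorm (proj I ** Rmat \<rho> ** proj I)))"]) auto
  moreover have "card ({} :: 'n set) \<le> k"
    by simp
  ultimately show ?thesis
    unfolding mu_def by (subst Max_le_iff) blast+
qed

end
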